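(* Let $M,N$ be finitary matroids on a common ground set $E$ and let $A\subseteq E$. Then every $(M\setminus A,N/A)$-hindrance is also an $(M,N)$-hindrance.
   Context: For $X\subseteq E$, $N.X:=N/(E\setminus X)$. For an ordered pair $(M,N)$ of finitary matroids on a common ground set, an $(M,N)$-hindrance is a set $H$ that is independent but not spanning in the matroid $N.\mathsf{span}_M(H)$, where $\mathsf{span}_M$ is the closure operator of $M$. $M\setminus A$ is deletion and $N/A$ is contraction of $A$ (both matroids on $E\setminus A$). *)

theory Defs
  imports Main
begin

text \<open>Matroids on a possibly infinite ground set, given by independence axioms
(Bruhn, Diestel, Kriesell, Pendavingh, Wollan).\<close>

record 'a matroid =
  carrier :: "'a set"
  indep :: "'a set \<Rightarrow> bool"

definition basis_of :: "'a matroid \<Rightarrow> 'a set \<Rightarrow> 'a set \<Rightarrow> bool" where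
  "basis_of M X B \<longleftrightarrow> B \<subseteq> X \<and> indep M B \<and>
     (\<forall>J. indep M J \<and> B \<subseteq> J \<and> J \<subseteq> X \<longrightarrow> J = B)"

definition matroid :: "'a matroid \<Rightarrow> bool" where
  "matroid M \<longleftrightarrow>
     (\<forall>I. indep M I \<longrightarrow> I \<subseteq> carrier M) \<and>
     indep M {} \<and>
     (\<forall>I J. indep M J \<and> I \<subseteq> J \<longrightarrow> indep M I) \<and>
     (\<forall>I B. indep M I \<and> \<not> basis_of M (carrier M) I \<and> basis_of M (carrier M) B \<longrightarrow>
        (\<exists>x \<in> B - I. indep M (insert x I))) \<and>
     (\<forall>X I. X \<subseteq> carrier M \<and> indep M I \<and> I \<subseteq> X \<longrightarrow>
        (\<exists>J. I \<subseteq> J \<and> basis_of M X J))"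

definition finitary :: "'a matroid \<Rightarrow> bool" where
  "finitary M \<longleftrightarrow> (\<forall>I. I \<subseteq> carrier M \<and> (\<forall>F. F \<subseteq> I \<and> finite F \<longrightarrow> indep M F) \<longrightarrow> indep M I)"

definition delete :: "'a matroid \<Rightarrow> 'a set \<Rightarrow> 'a matroid" where
  "delete M A = \<lparr>carrier = carrier M - A, indep = (\<lambda>I. indep M I \<and> I \<subseteq> carrier M - A)\<rparr>"

definition contract :: "'a matroid \<Rightarrow> 'a set \<Rightarrow> 'a matroid" where
  "contract N A = \<lparr>carrier = carrier N - A,
     indep = (\<lambda>I. I \<subseteq> carrier N - A \<and> (\<exists>B. basis_of N (A \<inter> carrier N) B \<and> indep N (I \<union> B)))\<rparr>"

definition dotrestr :: "'a matroid \<Rightarrow> 'a set \<Rightarrow> 'a matroid" where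
  "dotrestr N X = contract N (carrier N - X)"

definition span :: "'a matroid \<Rightarrow> 'a set \<Rightarrow> 'a set" where
  "span M X = X \<union> {e \<in> carrier M. \<exists>I. I \<subseteq> X \<and> indep M I \<and> \<not> indep M (insert e I)}"

definition spanning :: "'a matroid \<Rightarrow> 'a set \<Rightarrow> bool" where
  "spanning M S \<longleftrightarrow> S \<subseteq> carrier M \<and> span M S = carrier M"

definition hindrance :: "'a matroid \<Rightarrow> 'a matroid \<Rightarrow> 'a set \<Rightarrow> bool" where
  "hindrance M N H \<longleftrightarrow>
     indep (dotrestr N (span M H)) H \<and> \<not> spanning (dotrestr N (span M H)) H"

end

theory Submission
  imports Defs
begin

text \<open>Let \<open>S' = span (M \ A) H\<close> and \<open>S = span M H\<close>, so \<open>S' \<subseteq> S\<close>.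
The matroid \<open>(N/A).S'\<close> is \<open>N/A/(E - A - S')\<close>, which is \<open>N/(E - S')\<close>, and
contracting the smaller set \<open>E - S\<close> only creates more independent sets. Hence
every set independent in \<open>(N/A).S'\<close> is independent in \<open>N.S\<close>. So \<open>H\<close> is
independent in \<open>N.S\<close>, and an element \<open>e\<close> witnessing that \<open>H\<close> does not span
\<open>(N/A).S'\<close> makes \<open>H + e\<close> independent in \<open>N.S\<close>, so \<open>H\<close> does not span \<open>N.S\<close>.
The only matroid-theoretic input is that independence in \<open>N/Y\<close> does not
depend on the basis of \<open>Y\<close> used to define it, a base exchange argument.\<close>

lemma matroid_indep_subset:
  assumes "matroid N" "indep N J" "I \<subseteq> J"
  shows "indep N I"
  using assms unfolding matroid_def by metis

lemma matroid_indep_carrier: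
  assumes "matroid N" "indep N I"
  shows "I \<subseteq> carrier N"
  using assms unfolding matroid_def by metis

lemma matroid_indep_empty: "matroid N \<Longrightarrow> indep N {}"
  unfolding matroid_def by metis

lemma matroid_augment_to_base:
  assumes "matroid N" "indep N I" "\<not> basis_of N (carrier N) I" "basis_of N (carrier N) B"
  shows "\<exists>x \<in> B - I. indep N (insert x I)"
  using assms unfolding matroid_def by metis

lemma matroid_extend_to_basis:
  assumes "matroid N" "X \<subseteq> carrier N" "indep N I" "I \<subseteq> X"
  shows "\<exists>J. I \<subseteq> J \<and> basis_of N X J"
  using assms unfolding matroid_def by metis

lemma basis_of_maximal:
  assumes "basis_of N X B" "x \<in> X" "indep N (insert x B)"
  shows "x \<in> B"
  using assms unfolding basis_of_def by blast

lemma base_exchange: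
  assumes N: "matroid N" and B: "basis_of N (carrier N) B" and T: "basis_of N (carrier N) T"
    and z: "z \<in> B - T"
  shows "\<exists>w \<in> T - B. indep N (insert w (B - {z}))"
proof -
  have "indep N B" using B unfolding basis_of_def by blast
  then have "indep N (B - {z})" using matroid_indep_subset[OF N] by blast
  moreover have "\<not> basis_of N (carrier N) (B - {z})"
  proof
    assume "basis_of N (carrier N) (B - {z})"
    moreover have "B \<subseteq> carrier N" using B unfolding basis_of_def by blast
    ultimately have "B = B - {z}" using \<open>indep N B\<close> unfolding basis_of_def by blast
    then show False using z by blast
  qed
  ultimately obtain w where "w \<in> T - (B - {z})" "indep N (insert w (B - {z}))"
    using matroid_augment_to_base[OF N _ _ T] by blast
  then show ?thesis using z by blast
qed
lemma basis_extension_is_base: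
  assumes N: "matroid N" and Q: "basis_of N Y Q" and T: "basis_of N Z T" and "Q \<subseteq> T"
    and B: "basis_of N (carrier N) B" and "B \<subseteq> Y \<union> Z"
  shows "basis_of N (carrier N) T"
proof (rule ccontr)
  assume "\<not> basis_of N (carrier N) T"
  moreover have "indep N T" using T unfolding basis_of_def by blast
  ultimately obtain x where x: "x \<in> B - T" "indep N (insert x T)"
    using matroid_augment_to_base[OF N _ _ B] by blast
  then consider "x \<in> Y" | "x \<in> Z" using \<open>B \<subseteq> Y \<union> Z\<close> by blast
  then show False
  proof cases
    case 1
    have "indep N (insert x Q)"
      using matroid_indep_subset[OF N x(2)] \<open>Q \<subseteq> T\<close> by blast
    then show False using basis_of_maximal[OF Q 1] x(1) \<open>Q \<subseteq> T\<close> by blast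
  next
    case 2
    then show False using basis_of_maximal[OF T 2 x(2)] x(1) by blast
  qed
qed

text \<open>Extend \<open>P \<union> Q0\<close> to a base \<open>B\<close>; a basis \<open>T\<close> of \<open>Q1 \<union> (B - Y)\<close> containing \<open>Q1\<close> is a
base, and it contains \<open>B - Y \<supseteq> P\<close>, since exchanging some \<open>z \<in> B - Y\<close> out of \<open>B\<close>
could only bring in an element of \<open>Q1 - B \<subseteq> Y\<close>, contradicting maximality of \<open>Q0\<close>.\<close>
lemma indep_Un_basis_swap:
  assumes N: "matroid N" and Q0: "basis_of N Y Q0" and Q1: "basis_of N Y Q1"
    and "P \<inter> Y = {}" and "indep N (P \<union> Q0)"
  shows "indep N (P \<union> Q1)"
proof -
  obtain B where PQB: "P \<union> Q0 \<subseteq> B" and B: "basis_of N (carrier N) B"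
    using matroid_extend_to_basis[OF N order_refl \<open>indep N (P \<union> Q0)\<close>]
      matroid_indep_carrier[OF N \<open>indep N (P \<union> Q0)\<close>] by blast
  have "indep N Q1" "Q1 \<subseteq> Y" "indep N B" "B \<subseteq> carrier N"
    using Q1 B unfolding basis_of_def by auto
  define Z where "Z = Q1 \<union> (B - Y)"
  have "Z \<subseteq> carrier N"
    using matroid_indep_carrier[OF N \<open>indep N Q1\<close>] \<open>B \<subseteq> carrier N\<close> unfolding Z_def by blast
  then obtain T where "Q1 \<subseteq> T" and T: "basis_of N Z T"
    using matroid_extend_to_basis[OF N _ \<open>indep N Q1\<close>] unfolding Z_def by blast
  have "T \<subseteq> Z" "indep N T" using T unfolding basis_of_def by auto
  have "B \<subseteq> Y \<union> Z" unfolding Z_def by blast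
  then have T_base: "basis_of N (carrier N) T"
    by (rule basis_extension_is_base[OF N Q1 T \<open>Q1 \<subseteq> T\<close> B])
  have "B - Y \<subseteq> T"
  proof
    fix z assume z: "z \<in> B - Y"
    show "z \<in> T"
    proof (rule ccontr)
      assume "z \<notin> T"
      then obtain w where w: "w \<in> T - B" "indep N (insert w (B - {z}))"
        using base_exchange[OF N B T_base] z by blast
      have "w \<in> Y" using w(1) \<open>T \<subseteq> Z\<close> \<open>Q1 \<subseteq> Y\<close> unfolding Z_def by blast
      have "Q0 \<subseteq> Y" using Q0 unfolding basis_of_def by blast
      then have "insert w Q0 \<subseteq> insert w (B - {z})" using PQB z by blast
      then have "indep N (insert w Q0)" by (rule matroid_indep_subset[OF N w(2)])
      then have "w \<in> Q0" using basis_of_maximal[OF Q0 \<open>w \<in> Y\<close>] by blast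
      then show False using w(1) PQB by blast
    qed
  qed
  then have "P \<union> Q1 \<subseteq> T" using PQB \<open>P \<inter> Y = {}\<close> \<open>Q1 \<subseteq> T\<close> by blast
  then show ?thesis using matroid_indep_subset[OF N \<open>indep N T\<close>] by blast
qed

lemma carrier_contract [simp]: "carrier (contract N A) = carrier N - A"
  unfolding contract_def by simp

lemma indep_contract_iff:
  "indep (contract N A) I \<longleftrightarrow>
     I \<subseteq> carrier N - A \<and> (\<exists>B. basis_of N (A \<inter> carrier N) B \<and> indep N (I \<union> B))"
  unfolding contract_def by simp

lemma indep_contract_subset:
  assumes "matroid N" "indep (contract N A) J" "I \<subseteq> J"
  shows "indep (contract N A) I"
proof -
  obtain B where "J \<subseteq> carrier N - A" "basis_of N (A \<inter> carrier N) B" "indep N (J \<union> B)"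
    using assms(2) unfolding indep_contract_iff by blast
  moreover have "indep N (I \<union> B)"
    using matroid_indep_subset[OF assms(1) \<open>indep N (J \<union> B)\<close>] assms(3) by blast
  ultimately show ?thesis using assms(3) unfolding indep_contract_iff by blast
qed

lemma indep_contract_antimono:
  assumes N: "matroid N" and I: "indep (contract N Y) I" and "D \<subseteq> Y"
  shows "indep (contract N D) I"
proof -
  obtain Q where Q: "basis_of N (Y \<inter> carrier N) Q" and "indep N (I \<union> Q)"
    and "I \<subseteq> carrier N - Y"
    using I unfolding indep_contract_iff by blast
  obtain B where B: "basis_of N (D \<inter> carrier N) B"
    using matroid_extend_to_basis[OF N _ matroid_indep_empty[OF N]] by blast
  then have "indep N B" "B \<subseteq> Y \<inter> carrier N"
    using \<open>D \<subseteq> Y\<close> unfolding basis_of_def by auto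
  then obtain Q' where "B \<subseteq> Q'" and Q': "basis_of N (Y \<inter> carrier N) Q'"
    using matroid_extend_to_basis[OF N, of "Y \<inter> carrier N" B] by blast
  have "indep N (I \<union> Q')"
    using indep_Un_basis_swap[OF N Q Q'] \<open>indep N (I \<union> Q)\<close> \<open>I \<subseteq> carrier N - Y\<close> by blast
  then have "indep N (I \<union> B)"
    using matroid_indep_subset[OF N] \<open>B \<subseteq> Q'\<close> by blast
  then show ?thesis
    using B \<open>I \<subseteq> carrier N - Y\<close> \<open>D \<subseteq> Y\<close> unfolding indep_contract_iff by blast
qed

lemma basis_of_contract_Un:
  assumes N: "matroid N" and "A \<subseteq> carrier N"
    and B1: "basis_of N A B1" and B': "basis_of (contract N A) V B'"
  shows "basis_of N (A \<union> V) (B' \<union> B1)"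
proof -
  have A: "A \<inter> carrier N = A" using \<open>A \<subseteq> carrier N\<close> by blast
  have "B' \<subseteq> V" "indep (contract N A) B'" using B' unfolding basis_of_def by auto
  then obtain B where "B' \<subseteq> carrier N - A" "basis_of N A B" "indep N (B' \<union> B)"
    unfolding indep_contract_iff A by blast
  then have indep: "indep N (B' \<union> B1)"
    using indep_Un_basis_swap[OF N _ B1] by blast
  have "B1 \<subseteq> A" using B1 unfolding basis_of_def by blast
  have maximal: "J = B' \<union> B1" if J: "indep N J" "B' \<union> B1 \<subseteq> J" "J \<subseteq> A \<union> V" for J
  proof (rule ccontr)
    assume "J \<noteq> B' \<union> B1"
    then obtain x where x: "x \<in> J" "x \<notin> B' \<union> B1" using J by blast
    then have "insert x B' \<union> B1 \<subseteq> J" using J(2) by blast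
    then have ind_x: "indep N (insert x B' \<union> B1)" by (rule matroid_indep_subset[OF N J(1)])
    show False
    proof (cases "x \<in> A")
      case True
      have "indep N (insert x B1)" using matroid_indep_subset[OF N ind_x] by blast
      then show False using basis_of_maximal[OF B1 True] x(2) by blast
    next
      case False
      have "x \<in> V" using J(3) x(1) False by blast
      have "x \<in> carrier N" using matroid_indep_carrier[OF N J(1)] x(1) by blast
      then have "insert x B' \<subseteq> carrier N - A" using \<open>B' \<subseteq> carrier N - A\<close> False by blast
      then have "indep (contract N A) (insert x B')"
        using B1 ind_x unfolding indep_contract_iff A by blast
      then show False using basis_of_maximal[OF B' \<open>x \<in> V\<close>] x(2) by blast
    qed
  qed
  show ?thesis
    unfolding basis_of_def using indep maximal \<open>B' \<subseteq> V\<close> \<open>B1 \<subseteq> A\<close> by blast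
qed

lemma indep_contract_contract:
  assumes N: "matroid N" and "A \<subseteq> carrier N" and J: "indep (contract (contract N A) V) J"
  shows "indep (contract N (A \<union> V)) J"
proof -
  have A: "A \<inter> carrier N = A" using \<open>A \<subseteq> carrier N\<close> by blast
  obtain B' where "J \<subseteq> carrier N - A - V"
    and B': "basis_of (contract N A) (V \<inter> (carrier N - A)) B'"
    and "indep (contract N A) (J \<union> B')"
    using J unfolding indep_contract_iff[of "contract N A"] by auto
  then obtain B1 where B1: "basis_of N A B1" and "indep N (J \<union> B' \<union> B1)"
    unfolding indep_contract_iff A by blast
  have "A \<union> V \<inter> (carrier N - A) = (A \<union> V) \<inter> carrier N"
    using \<open>A \<subseteq> carrier N\<close> by blast
  then have "basis_of N ((A \<union> V) \<inter> carrier N) (B' \<union> B1)"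
    using basis_of_contract_Un[OF N \<open>A \<subseteq> carrier N\<close> B1 B'] by simp
  moreover have "indep N (J \<union> (B' \<union> B1))"
    using \<open>indep N (J \<union> B' \<union> B1)\<close> by (simp add: Un_assoc)
  ultimately show ?thesis
    using \<open>J \<subseteq> carrier N - A - V\<close> unfolding indep_contract_iff by blast
qed

lemma indep_dotrestr_contract:
  assumes N: "matroid N" and "A \<subseteq> carrier N" and I: "indep (dotrestr (contract N A) X) I"
    and "X \<subseteq> Y"
  shows "indep (dotrestr N Y) I"
proof -
  have "indep (contract N (A \<union> (carrier N - A - X))) I"
    using indep_contract_contract[OF N \<open>A \<subseteq> carrier N\<close>] I unfolding dotrestr_def by simp
  then show ?thesis
    unfolding dotrestr_def using indep_contract_antimono[OF N] \<open>X \<subseteq> Y\<close> by blast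
qed

lemma span_delete_subset: "span (delete M A) X \<subseteq> span M X"
  unfolding span_def delete_def by auto

lemma not_spanning_transfer:
  assumes H: "indep N1 H" "\<not> spanning N1 H" "H \<subseteq> carrier N1"
    and "carrier N1 \<subseteq> carrier N2"
    and indep_transfer: "\<And>I. indep N1 I \<Longrightarrow> indep N2 I"
    and hereditary: "\<And>I J. indep N2 J \<Longrightarrow> I \<subseteq> J \<Longrightarrow> indep N2 I"
  shows "\<not> spanning N2 H"
proof
  assume spans: "spanning N2 H"
  have "span N1 H \<subseteq> carrier N1" using H(3) unfolding span_def by blast
  then obtain e where e: "e \<in> carrier N1" "e \<notin> span N1 H"
    using H(2,3) unfolding spanning_def by blast
  then have "e \<notin> H" "indep N1 (insert e H)"
    using H(1) unfolding span_def by blast+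
  moreover have "e \<in> span N2 H"
    using spans e(1) \<open>carrier N1 \<subseteq> carrier N2\<close> unfolding spanning_def by blast
  ultimately obtain I where "I \<subseteq> H" "\<not> indep N2 (insert e I)"
    unfolding span_def by blast
  moreover have "insert e I \<subseteq> insert e H" using \<open>I \<subseteq> H\<close> by blast
  ultimately show False
    using hereditary indep_transfer[OF \<open>indep N1 (insert e H)\<close>] by blast
qed

theorem mainTheorem5:
  fixes M N :: "'a matroid" and E A H :: "'a set"
  assumes "matroid M" and "matroid N"
    and "finitary M" and "finitary N"
    and "carrier M = E" and "carrier N = E"
    and "A \<subseteq> E"
    and "hindrance (delete M A) (contract N A) H"
  shows "hindrance M N H"
proof -
  let ?N' = "dotrestr (contract N A) (span (delete M A) H)"
  let ?N = "dotrestr N (span M H)"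
  have "A \<subseteq> carrier N" using assms(6,7) by simp
  have "carrier ?N' \<subseteq> carrier ?N"
    using span_delete_subset[of M A H] unfolding dotrestr_def by auto
  moreover have "indep ?N I" if "indep ?N' I" for I
    using indep_dotrestr_contract[OF assms(2) \<open>A \<subseteq> carrier N\<close> that span_delete_subset] .
  moreover have "indep ?N I" if "indep ?N J" "I \<subseteq> J" for I J
    using indep_contract_subset[OF assms(2)] that unfolding dotrestr_def by blast
  moreover have "indep ?N' H" "\<not> spanning ?N' H"
    using assms(8) unfolding hindrance_def by blast+
  moreover have "H \<subseteq> carrier ?N'"
    using \<open>indep ?N' H\<close> unfolding dotrestr_def indep_contract_iff[of "contract N A"] by auto
  ultimately show ?thesis
    using not_spanning_transfer[of ?N' H ?N] unfolding hindrance_def by blast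
qed

end
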